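(* Let $x\in\mathcal{X}(\mathbb{Z}_S)$ and let $a(x)=a_1(x)+a_2(x)$ be a cocycle $G_T\to U_2$ representing the class of the path torsor $\pi_1^{u,\mathbb{Q}_p}(\bar X;b,x)$. Let $b_x:G_T\to L_1$ be a cochain with $db_x=c\cup a_1(x)$. Then the $Z$-valued 2-cochain $$\phi_x=b_x\cup a_1(x)-2c\cup a_2(x)$$ on $G_T\times G_T$ is a cocycle.
   Context: Setting. $E$ is an elliptic curve over $\mathbb{Q}$ with origin $e$ and $\operatorname{ord}_{s=1}L(E,s)=1$, $X=E\setminus\{e\}$, $\mathcal{E}$ a regular minimal model over $\mathbb{Z}$, $\mathcal{X}$ the complement of the closure of $e$; $p$ an odd prime of good reduction; $S$ a finite set of places containing $\infty$ and the bad primes, $T=S\cup\{p\}$, $G_T$ the Galois group of the maximal extension of $\mathbb{Q}$ unramified outside $T$. $b$ is a nonzero rational tangent vector at $e$ (tangential base point). $U=\pi_1^{u,\mathbb{Q}_p}(\bar X,b)$, $U_2=U^3\backslash U$ (descending central series), $L=\mathrm{Lie}\,U$, $L_2=L/L^3$, $L_1=L/L^2$, $Z=L^2/L^3\cong\mathbb{Q}_p(1)$; the logarithm identifies $U_2$ with $L_2$, and $L_2=L_1\oplus Z$ via the $G$-equivariant splitting $x\mapsto\frac12(x'-I(x'))$, where $I$ is the automorphism induced by $[-1]$ on $E$ and the canonical path from $-b$ to $b$ ($I=-1$ on $L_1$, $I=\mathrm{id}$ on $Z$). Group law: $(l_1+l_2)*(l_1'+l_2')=(l_1+l_1')+(l_2+l_2'+\frac12[l_1,l_1'])$.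 A cocycle $a=a_1+a_2$ into $U_2$ means $a_1$ is an $L_1$-valued cocycle and $da_2=-\frac12 a_1\cup a_1$. Cup products: for $L_1$-valued 1-cochains, $(c\cup c')(g,h)=[c(g),gc'(h)]$; for a $\mathbb{Q}_p$-valued 1-cochain $c$ and a vector-valued cochain $a$, $(c\cup a)(g,h)=c(g)\,ga(h)$. $c=\log\chi:G_T\to\mathbb{Q}_p$, with $\chi$ the $p$-adic cyclotomic character. *)

theory Defs
  imports "HOL-Algebra.Group" "HOL.Modules"
begin

text \<open>Abstract algebraic setting: a group G (standing for G_T), a scalar field k
(standing for Q_p), k-modules L1 and Z with k-linear G-actions, a k-bilinear
G-equivariant bracket L1 x L1 -> Z (the Lie bracket of L_2 = L_1 + Z).\<close>

definition linear_action ::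
  "('g, 'm) monoid_scheme \<Rightarrow> ('k::comm_ring_1 \<Rightarrow> 'v::ab_group_add \<Rightarrow> 'v) \<Rightarrow> ('g \<Rightarrow> 'v \<Rightarrow> 'v) \<Rightarrow> bool"
  where "linear_action G s act \<longleftrightarrow>
     (\<forall>v. act \<one>\<^bsub>G\<^esub> v = v) \<and>
     (\<forall>g\<in>carrier G. \<forall>h\<in>carrier G. \<forall>v. act (g \<otimes>\<^bsub>G\<^esub> h) v = act g (act h v)) \<and>
     (\<forall>g\<in>carrier G. \<forall>v w. act g (v + w) = act g v + act g w) \<and>
     (\<forall>g\<in>carrier G. \<forall>r v. act g (s r v) = s r (act g v))"

definition bilinear_map ::
  "('k::comm_ring_1 \<Rightarrow> 'v::ab_group_add \<Rightarrow> 'v) \<Rightarrow> ('k \<Rightarrow> 'w::ab_group_add \<Rightarrow> 'w) \<Rightarrow> ('v \<Rightarrow> 'v \<Rightarrow> 'w) \<Rightarrow> bool"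
  where "bilinear_map sV sW br \<longleftrightarrow>
     (\<forall>x y z. br (x + y) z = br x z + br y z) \<and>
     (\<forall>x y z. br x (y + z) = br x y + br x z) \<and>
     (\<forall>r x y. br (sV r x) y = sW r (br x y)) \<and>
     (\<forall>r x y. br x (sV r y) = sW r (br x y))"

definition cobound1 ::
  "('g, 'm) monoid_scheme \<Rightarrow> ('g \<Rightarrow> 'v \<Rightarrow> 'v) \<Rightarrow> ('g \<Rightarrow> 'v::ab_group_add) \<Rightarrow> 'g \<Rightarrow> 'g \<Rightarrow> 'v"
  where "cobound1 G act f g h = act g (f h) - f (g \<otimes>\<^bsub>G\<^esub> h) + f g"

definition cobound2 ::
  "('g, 'm) monoid_scheme \<Rightarrow> ('g \<Rightarrow> 'v \<Rightarrow> 'v) \<Rightarrow> ('g \<Rightarrow> 'g \<Rightarrow> 'v::ab_group_add) \<Rightarrow> 'g \<Rightarrow> 'g \<Rightarrow> 'g \<Rightarrow> 'v"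
  where "cobound2 G act \<phi> g h k =
     act g (\<phi> h k) - \<phi> (g \<otimes>\<^bsub>G\<^esub> h) k + \<phi> g (h \<otimes>\<^bsub>G\<^esub> k) - \<phi> g h"

definition cocycle1 :: "('g, 'm) monoid_scheme \<Rightarrow> ('g \<Rightarrow> 'v \<Rightarrow> 'v) \<Rightarrow> ('g \<Rightarrow> 'v::ab_group_add) \<Rightarrow> bool"
  where "cocycle1 G act f \<longleftrightarrow> (\<forall>g\<in>carrier G. \<forall>h\<in>carrier G. cobound1 G act f g h = 0)"

definition cocycle2 :: "('g, 'm) monoid_scheme \<Rightarrow> ('g \<Rightarrow> 'v \<Rightarrow> 'v) \<Rightarrow> ('g \<Rightarrow> 'g \<Rightarrow> 'v::ab_group_add) \<Rightarrow> bool"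
  where "cocycle2 G act \<phi> \<longleftrightarrow>
     (\<forall>g\<in>carrier G. \<forall>h\<in>carrier G. \<forall>k\<in>carrier G. cobound2 G act \<phi> g h k = 0)"

definition cup_br :: "('g \<Rightarrow> 'l \<Rightarrow> 'l) \<Rightarrow> ('l \<Rightarrow> 'l \<Rightarrow> 'z) \<Rightarrow> ('g \<Rightarrow> 'l) \<Rightarrow> ('g \<Rightarrow> 'l) \<Rightarrow> 'g \<Rightarrow> 'g \<Rightarrow> 'z"
  where "cup_br act br f f' g h = br (f g) (act g (f' h))"

definition cup_sc :: "('k \<Rightarrow> 'v \<Rightarrow> 'v) \<Rightarrow> ('g \<Rightarrow> 'v \<Rightarrow> 'v) \<Rightarrow> ('g \<Rightarrow> 'k) \<Rightarrow> ('g \<Rightarrow> 'v) \<Rightarrow> 'g \<Rightarrow> 'g \<Rightarrow> 'v"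
  where "cup_sc s act c a g h = s (c g) (act g (a h))"

end

theory Submission
  imports Defs
begin

text \<open>The Leibniz rule \<open>d(f \<union> f') = df \<union> f' - f \<union> df'\<close> gives
\<open>d(b\<^sub>x \<union> a\<^sub>1) = (c \<union> a\<^sub>1) \<union> a\<^sub>1\<close> and \<open>d(2c \<union> a\<^sub>2) = -2c \<union> da\<^sub>2 = c \<union> (a\<^sub>1 \<union> a\<^sub>1)\<close>
(\<open>c\<close> being a homomorphism, \<open>dc = 0\<close>), and the two triple products agree.\<close>

definition cup :: "('u \<Rightarrow> 'v \<Rightarrow> 'w) \<Rightarrow> ('g \<Rightarrow> 'v \<Rightarrow> 'v) \<Rightarrow> ('g \<Rightarrow> 'u) \<Rightarrow> ('g \<Rightarrow> 'v) \<Rightarrow> 'g \<Rightarrow> 'g \<Rightarrow> 'w"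
  where "cup pair act f f' g h = pair (f g) (act g (f' h))"

lemma cup_br_eq_cup: "cup_br act br = cup br act"
  by (simp add: fun_eq_iff cup_br_def cup_def)

lemma cup_sc_eq_cup: "cup_sc s act = cup s act"
  by (simp add: fun_eq_iff cup_sc_def cup_def)

lemma cobound2_diff:
  fixes act :: "'g \<Rightarrow> 'v::ab_group_add \<Rightarrow> 'v"
  assumes "additive (act g)"
  shows "cobound2 G act (\<lambda>g h. \<phi> g h - \<psi> g h) g h k = cobound2 G act \<phi> g h k - cobound2 G act \<psi> g h k"
  by (simp add: cobound2_def additive.diff[OF assms] algebra_simps)

lemma cobound2_cup:
  fixes pair :: "'u::ab_group_add \<Rightarrow> 'v::ab_group_add \<Rightarrow> 'w::ab_group_add"
  assumes pair_add_left: "\<And>x y v. pair (x + y) v = pair x v + pair y v"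
    and pair_add_right: "\<And>u x y. pair u (x + y) = pair u x + pair u y"
    and act_add: "\<And>x y. actV g (x + y) = actV g x + actV g y"
    and act_mult: "\<And>x. actV (g \<otimes>\<^bsub>G\<^esub> h) x = actV g (actV h x)"
    and equivariant: "\<And>u v. actW g (pair u v) = pair (actU g u) (actV g v)"
  shows "cobound2 G actW (cup pair actV f f') g h k =
           pair (cobound1 G actU f g h) (actV (g \<otimes>\<^bsub>G\<^esub> h) (f' k))
         - pair (f g) (actV g (cobound1 G actV f' h k))"
proof -
  have "additive (\<lambda>x. pair x v)" for v by unfold_locales (rule pair_add_left)
  note left_diff = additive.diff[OF this]
  have "additive (pair u)" for u by unfold_locales (rule pair_add_right)
  note right_diff = additive.diff[OF this]
  have "additive (actV g)" by unfold_locales (rule act_add)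
  note act_diff = additive.diff[OF this]
  show ?thesis
    by (simp add: cobound2_def cobound1_def cup_def left_diff right_diff act_diff
        pair_add_left pair_add_right act_add act_mult equivariant)
qed

lemma linear_actionD:
  assumes "linear_action G s act" and "g \<in> carrier G" and "h \<in> carrier G"
  shows "act (g \<otimes>\<^bsub>G\<^esub> h) v = act g (act h v)"
    and "act g (v + w) = act g v + act g w"
    and "act g (s r v) = s r (act g v)"
  using assms unfolding linear_action_def by blast+

lemma linear_action_additive:
  assumes "linear_action G s act" and "g \<in> carrier G"
  shows "additive (act g)"
  by unfold_locales (use assms in \<open>simp add: linear_action_def\<close>)

lemma bilinear_mapD:
  assumes "bilinear_map sV sW br"
  shows "br (x + y) z = br x z + br y z"
    and "br x (y + z) = br x y + br x z"
    and "br (sV r x) y = sW r (br x y)"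
  using assms unfolding bilinear_map_def by blast+

lemma cobound2_cup_cocycle:
  assumes act: "linear_action G sV actV" and br: "bilinear_map sV sW br"
    and equivariant: "\<And>x y. actW g (br x y) = br (actV g x) (actV g y)"
    and g: "g \<in> carrier G" and h: "h \<in> carrier G"
    and cocycle: "cobound1 G actV a h k = 0"
    and cobound_b: "cobound1 G actV b g h = sV (c g) (actV g (a h))"
  shows "cobound2 G actW (cup br actV b a) g h k
           = sW (c g) (br (actV g (a h)) (actV (g \<otimes>\<^bsub>G\<^esub> h) (a k)))"
proof -
  have "br x 0 = 0" for x
    by (rule additive.zero) (unfold_locales, rule bilinear_mapD(2)[OF br])
  moreover have "actV g 0 = 0"
    using additive.zero[OF linear_action_additive[OF act g]] .
  ultimately show ?thesis
    by (simp add: cobound2_cup[where actU = actV] bilinear_mapD[OF br] linear_actionD[OF act g h]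
        equivariant cocycle cobound_b)
qed

lemma cobound2_cup_homomorphism:
  fixes s :: "'k::comm_ring_1 \<Rightarrow> 'v::ab_group_add \<Rightarrow> 'v"
  assumes "module s" and act: "linear_action G s act"
    and g: "g \<in> carrier G" and h: "h \<in> carrier G"
    and hom: "c (g \<otimes>\<^bsub>G\<^esub> h) = c g + c h"
    and cobound_a: "cobound1 G act a h k = s r y"
  shows "cobound2 G act (cup s act c a) g h k = - s (c g * r) (act g y)"
proof -
  interpret module s by fact
  have "cobound1 G (\<lambda>_ r. r) c g h = 0"
    by (simp add: cobound1_def hom)
  then show ?thesis
    by (simp add: cobound2_cup[where actU = "\<lambda>_ r. r"] scale_left_distrib scale_right_distrib
        linear_actionD[OF act g h] cobound_a)
qed

theorem lemma2p1:
  fixes G :: "('g, 'm) monoid_scheme"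
    and sL :: "'k::field_char_0 \<Rightarrow> 'l::ab_group_add \<Rightarrow> 'l"
    and sZ :: "'k \<Rightarrow> 'z::ab_group_add \<Rightarrow> 'z"
    and actL :: "'g \<Rightarrow> 'l \<Rightarrow> 'l"
    and actZ :: "'g \<Rightarrow> 'z \<Rightarrow> 'z"
    and br :: "'l \<Rightarrow> 'l \<Rightarrow> 'z"
    and c :: "'g \<Rightarrow> 'k"
    and a1 :: "'g \<Rightarrow> 'l" and a2 :: "'g \<Rightarrow> 'z" and b :: "'g \<Rightarrow> 'l"
  assumes "group G"
    and "module sL" and "module sZ"
    and "linear_action G sL actL" and "linear_action G sZ actZ"
    and "bilinear_map sL sZ br"
    and "\<forall>g\<in>carrier G. \<forall>x y. actZ g (br x y) = br (actL g x) (actL g y)"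
    and "\<forall>g\<in>carrier G. \<forall>h\<in>carrier G. c (g \<otimes>\<^bsub>G\<^esub> h) = c g + c h"
    and "cocycle1 G actL a1"
    and "\<forall>g\<in>carrier G. \<forall>h\<in>carrier G.
           cobound1 G actZ a2 g h = sZ (- (1/2)) (cup_br actL br a1 a1 g h)"
    and "\<forall>g\<in>carrier G. \<forall>h\<in>carrier G.
           cobound1 G actL b g h = cup_sc sL actL c a1 g h"
  shows "cocycle2 G actZ
           (\<lambda>g h. cup_br actL br b a1 g h - sZ 2 (cup_sc sZ actZ c a2 g h))"
proof -
  have \<phi>_eq: "(\<lambda>g h. cup_br actL br b a1 g h - sZ 2 (cup_sc sZ actZ c a2 g h))
      = (\<lambda>g h. cup br actL b a1 g h - cup sZ actZ (\<lambda>g. 2 * c g) a2 g h)"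
    by (simp add: fun_eq_iff cup_br_eq_cup cup_sc_eq_cup cup_def module.scale_scale[OF assms(3)])
  show ?thesis
    unfolding cocycle2_def \<phi>_eq
  proof (intro ballI)
    fix g h k assume g: "g \<in> carrier G" and h: "h \<in> carrier G" and k: "k \<in> carrier G"
    have equivariant: "\<And>x y. actZ g (br x y) = br (actL g x) (actL g y)"
      using assms(7) g by blast
    have "cobound2 G actZ (cup br actL b a1) g h k
        = sZ (c g) (br (actL g (a1 h)) (actL (g \<otimes>\<^bsub>G\<^esub> h) (a1 k)))"
      using assms(9,11) g h k
      by (intro cobound2_cup_cocycle[where actW = actZ, OF assms(4,6) equivariant g h])
        (auto simp: cocycle1_def cup_sc_def)
    moreover have "cobound2 G actZ (cup sZ actZ (\<lambda>g. 2 * c g) a2) g h k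
        = - sZ (2 * c g * - (1/2)) (actZ g (br (a1 h) (actL h (a1 k))))"
      using assms(8,10) g h k
      by (intro cobound2_cup_homomorphism[OF assms(3,5) g h]) (auto simp: cup_br_def algebra_simps)
    ultimately show "cobound2 G actZ (\<lambda>g h. cup br actL b a1 g h - cup sZ actZ (\<lambda>g. 2 * c g) a2 g h) g h k = 0"
      by (simp add: cobound2_diff linear_action_additive[OF assms(5) g] equivariant
          linear_actionD(1)[OF assms(4) g h] module.scale_minus_left[OF assms(3)])
  qed
qed

end
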